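(* Let $R$ be a commutative Noetherian ring with unity, $\lambda$ a length function on $R$-modules, $S=R[x_1,\dots,x_k]$, $A$ an $S$-module and $\bar A=(A_i)_{i\in\mathbb{N}}$ a $\lambda$-inert filtration of $A$. Then there is a polynomial $\tilde q_{\bar A}(t)\in\mathbb{R}[t]$ of degree at most $k-1$ such that $\lambda(\tilde A_n)=\tilde q_{\bar A}(n)$ for all sufficiently large $n\in\mathbb{N}$.
   Context: A length function on $R$-modules is a function $\lambda$ from $R$-modules to $\mathbb{R}_{\ge0}\cup\{\infty\}$ with $\lambda(0)=0$, invariant under isomorphism, additive on short exact sequences, and with $\lambda(N)=\sup\{\lambda(N'):N'\le N$ finitely generated$\}$. A filtration of $A$ is an increasing sequence of $R$-submodules $A_0\le A_1\le\dots$ with $\bigcup A_i=A$ and $x_jA_i\subseteq A_{i+1}$ for all $i,j$. Put $\tilde A_i=A_{i+1}/A_i$ and let $\tilde{\mathcal B}(\bar A)=\bigoplus_{i\in\mathbb{N}}\tilde A_i$, the graded $S$-module in which each $x_j$ acts with degree $1$ (induced maps $\tilde A_i\to\tilde A_{i+1}$). The filtration is $\lambda$-inert if $\tilde{\mathcal B}(\bar A)$ is a Noetherian $S$-module and there is $n_0$ with $\lambda(\tilde A_n)<\infty$ for all $n\ge n_0$. *)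

theory Defs
  imports "HOL-Algebra.Module" "HOL-Algebra.AbelCoset" "HOL-Algebra.Ring_Divisibility"
    "HOL-Computational_Algebra.Polynomial" "HOL-Library.Extended_Nonnegative_Real"
begin

definition mod_hom :: "'r ring \<Rightarrow> ('r,'a) module \<Rightarrow> ('r,'b) module \<Rightarrow> ('a \<Rightarrow> 'b) \<Rightarrow> bool" where
  "mod_hom R M N f \<longleftrightarrow> f \<in> carrier M \<rightarrow> carrier N
     \<and> (\<forall>x\<in>carrier M. \<forall>y\<in>carrier M. f (x \<oplus>\<^bsub>M\<^esub> y) = f x \<oplus>\<^bsub>N\<^esub> f y)
     \<and> (\<forall>a\<in>carrier R. \<forall>x\<in>carrier M. f (a \<odot>\<^bsub>M\<^esub> x) = a \<odot>\<^bsub>N\<^esub> f x)"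

definition mod_iso :: "'r ring \<Rightarrow> ('r,'a) module \<Rightarrow> ('r,'b) module \<Rightarrow> bool" where
  "mod_iso R M N \<longleftrightarrow> (\<exists>f. mod_hom R M N f \<and> bij_betw f (carrier M) (carrier N))"

definition short_exact :: "'r ring \<Rightarrow> ('r,'a) module \<Rightarrow> ('r,'b) module \<Rightarrow> ('r,'c) module
    \<Rightarrow> ('a \<Rightarrow> 'b) \<Rightarrow> ('b \<Rightarrow> 'c) \<Rightarrow> bool" where
  "short_exact R L M N f g \<longleftrightarrow> mod_hom R L M f \<and> mod_hom R M N g
     \<and> inj_on f (carrier L) \<and> g ` carrier M = carrier N
     \<and> f ` carrier L = {x \<in> carrier M. g x = \<zero>\<^bsub>N\<^esub>}"

definition submod_span :: "'r ring \<Rightarrow> ('r,'a) module \<Rightarrow> 'a set \<Rightarrow> 'a set" where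
  "submod_span R M F = \<Inter>{H. submodule H R M \<and> F \<subseteq> H}"

definition fg_submodule :: "'r ring \<Rightarrow> ('r,'a) module \<Rightarrow> 'a set \<Rightarrow> bool" where
  "fg_submodule R M H \<longleftrightarrow> submodule H R M \<and> (\<exists>F. finite F \<and> F \<subseteq> H \<and> H = submod_span R M F)"

definition length_function :: "'r ring \<Rightarrow> (('r,'u) module \<Rightarrow> ennreal) \<Rightarrow> bool" where
  "length_function R lam \<longleftrightarrow>
     (\<forall>M. module R M \<and> carrier M = {\<zero>\<^bsub>M\<^esub>} \<longrightarrow> lam M = 0)
   \<and> (\<forall>M N. module R M \<and> module R N \<and> mod_iso R M N \<longrightarrow> lam M = lam N)
   \<and> (\<forall>L M N f g. module R L \<and> module R M \<and> module R N \<and> short_exact R L M N f g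
        \<longrightarrow> lam M = lam L + lam N)
   \<and> (\<forall>M. module R M \<longrightarrow> lam M = (SUP H\<in>{H. fg_submodule R M H}. lam (M\<lparr>carrier := H\<rparr>)))"

section \<open>Modules over S = R[x_0,...,x_(k-1)]: R-modules with k commuting R-endomorphisms\<close>

definition smodule :: "'r ring \<Rightarrow> ('r,'a) module \<Rightarrow> nat \<Rightarrow> (nat \<Rightarrow> 'a \<Rightarrow> 'a) \<Rightarrow> bool" where
  "smodule R M k X \<longleftrightarrow> module R M \<and> (\<forall>j<k. mod_hom R M M (X j))
     \<and> (\<forall>i<k. \<forall>j<k. \<forall>x\<in>carrier M. X i (X j x) = X j (X i x))"

definition s_submodule :: "'r ring \<Rightarrow> ('r,'a) module \<Rightarrow> nat \<Rightarrow> (nat \<Rightarrow> 'a \<Rightarrow> 'a) \<Rightarrow> 'a set \<Rightarrow> bool" where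
  "s_submodule R M k X H \<longleftrightarrow> submodule H R M \<and> (\<forall>j<k. X j ` H \<subseteq> H)"

definition s_span :: "'r ring \<Rightarrow> ('r,'a) module \<Rightarrow> nat \<Rightarrow> (nat \<Rightarrow> 'a \<Rightarrow> 'a) \<Rightarrow> 'a set \<Rightarrow> 'a set" where
  "s_span R M k X F = \<Inter>{H. s_submodule R M k X H \<and> F \<subseteq> H}"

definition noetherian_smodule :: "'r ring \<Rightarrow> ('r,'a) module \<Rightarrow> nat \<Rightarrow> (nat \<Rightarrow> 'a \<Rightarrow> 'a) \<Rightarrow> bool" where
  "noetherian_smodule R M k X \<longleftrightarrow> smodule R M k X \<and>
     (\<forall>H. s_submodule R M k X H \<longrightarrow> (\<exists>F. finite F \<and> F \<subseteq> H \<and> H = s_span R M k X F))"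

definition quot_module :: "('r,'a) module \<Rightarrow> 'a set \<Rightarrow> ('r, 'a set) module" where
  "quot_module M N =
     \<lparr>carrier = a_rcosets\<^bsub>M\<^esub> N, mult = (\<lambda>_ _. N), one = N, zero = N,
      add = set_add M, module.smult = (\<lambda>a C. N <+>\<^bsub>M\<^esub> ((\<lambda>x. a \<odot>\<^bsub>M\<^esub> x) ` C))\<rparr>"

definition filtration :: "'r ring \<Rightarrow> ('r,'a) module \<Rightarrow> nat \<Rightarrow> (nat \<Rightarrow> 'a \<Rightarrow> 'a) \<Rightarrow> (nat \<Rightarrow> 'a set) \<Rightarrow> bool" where
  "filtration R A k X Af \<longleftrightarrow> (\<forall>i. submodule (Af i) R A) \<and> (\<forall>i. Af i \<subseteq> Af (Suc i))
     \<and> (\<Union>i. Af i) = carrier A \<and> (\<forall>i. \<forall>j<k. X j ` Af i \<subseteq> Af (Suc i))"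

definition gr_piece :: "('r,'a) module \<Rightarrow> (nat \<Rightarrow> 'a set) \<Rightarrow> nat \<Rightarrow> ('r, 'a set) module" where
  "gr_piece A Af i = quot_module (A\<lparr>carrier := Af (Suc i)\<rparr>) (Af i)"

text \<open>The direct sum of all the pieces (finitely supported sequences).\<close>
definition assoc_graded :: "('r,'a) module \<Rightarrow> (nat \<Rightarrow> 'a set) \<Rightarrow> ('r, nat \<Rightarrow> 'a set) module" where
  "assoc_graded A Af =
     \<lparr>carrier = {b. (\<forall>i. b i \<in> carrier (gr_piece A Af i)) \<and> finite {i. b i \<noteq> Af i}},
      mult = (\<lambda>_ _. Af), one = Af, zero = Af,
      add = (\<lambda>b c i. b i <+>\<^bsub>A\<^esub> c i),
      module.smult = (\<lambda>a b i. a \<odot>\<^bsub>gr_piece A Af i\<^esub> b i)\<rparr>"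

text \<open>Induced degree-one action of x_j: A_(i+1)/A_i -> A_(i+2)/A_(i+1).\<close>
definition assoc_graded_X :: "('r,'a) module \<Rightarrow> (nat \<Rightarrow> 'a set) \<Rightarrow> (nat \<Rightarrow> 'a \<Rightarrow> 'a)
    \<Rightarrow> nat \<Rightarrow> (nat \<Rightarrow> 'a set) \<Rightarrow> (nat \<Rightarrow> 'a set)" where
  "assoc_graded_X A Af X j b i =
     (case i of 0 \<Rightarrow> Af 0 | Suc i' \<Rightarrow> Af i <+>\<^bsub>A\<^esub> (X j ` b i'))"

definition lambda_inert :: "'r ring \<Rightarrow> (('r,'a set) module \<Rightarrow> ennreal) \<Rightarrow> ('r,'a) module
    \<Rightarrow> nat \<Rightarrow> (nat \<Rightarrow> 'a \<Rightarrow> 'a) \<Rightarrow> (nat \<Rightarrow> 'a set) \<Rightarrow> bool" where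
  "lambda_inert R lam A k X Af \<longleftrightarrow> filtration R A k X Af
     \<and> noetherian_smodule R (assoc_graded A Af) k (assoc_graded_X A Af X)
     \<and> (\<exists>n0. \<forall>n\<ge>n0. lam (gr_piece A Af n) < \<infinity>)"

end

theory Submission
  imports Defs
begin

(* The Hilbert-Serre argument. Write P n = A_(n+1) and N n = A_n, so that the associated graded
   module is the family of subquotients P n / N n with x_j acting in degree one; its Noetherianity
   says that every graded S-submodule is generated in bounded degree. Induct on k. Multiplication
   by x_k gives exact sequences
     0 -> K_n / N_n -> P_n / N_n -> P_(n+1) / N_(n+1) -> P_(n+1) / C_(n+1) -> 0
   with K_n = {p in P_n. x_k p in N_(n+1)} and C_(n+1) = N_(n+1) + x_k P_n. The outer families are
   annihilated by x_k, hence graded modules over k - 1 variables, again generated in bounded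
   degree, so by induction their lengths are eventually polynomials of degree < k - 1. The first
   difference of lambda(P_n / N_n) is lambda(P_(n+1) / C_(n+1)) - lambda(K_n / N_n), so
   lambda(P_n / N_n) is eventually a polynomial of degree < k. *)

section \<open>Subquotient modules\<close>

definition subquotient :: "('r,'a) module \<Rightarrow> 'a set \<Rightarrow> 'a set \<Rightarrow> ('r,'a set) module" where
  "subquotient M P N = quot_module (M\<lparr>carrier := P\<rparr>) N"

lemma a_r_coset_carrier_update [simp]: "a_r_coset (M\<lparr>carrier := P\<rparr>) = a_r_coset M"
  by (intro ext) (simp add: a_r_coset_def')

lemma set_add_carrier_update [simp]: "set_add (M\<lparr>carrier := P\<rparr>) = set_add M"
  by (intro ext) (simp add: set_add_def')

lemma carrier_subquotient: "carrier (subquotient M P N) = (\<lambda>a. N +>\<^bsub>M\<^esub> a) ` P"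
  by (auto simp: subquotient_def quot_module_def A_RCOSETS_def')

lemma zero_subquotient [simp]: "\<zero>\<^bsub>subquotient M P N\<^esub> = N"
  by (simp add: subquotient_def quot_module_def)

lemma add_subquotient: "C \<oplus>\<^bsub>subquotient M P N\<^esub> D = C <+>\<^bsub>M\<^esub> D"
  by (simp add: subquotient_def quot_module_def)

lemma smult_subquotient: "r \<odot>\<^bsub>subquotient M P N\<^esub> C = N <+>\<^bsub>M\<^esub> ((\<lambda>x. r \<odot>\<^bsub>M\<^esub> x) ` C)"
  by (simp add: subquotient_def quot_module_def)

lemma mem_a_r_coset: "x \<in> N +>\<^bsub>M\<^esub> a \<longleftrightarrow> (\<exists>h\<in>N. x = h \<oplus>\<^bsub>M\<^esub> a)"
  by (auto simp: a_r_coset_def')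

lemma mem_set_add: "x \<in> C <+>\<^bsub>M\<^esub> D \<longleftrightarrow> (\<exists>c\<in>C. \<exists>d\<in>D. x = c \<oplus>\<^bsub>M\<^esub> d)"
  by (auto simp: set_add_def')

lemma submod_span_mono: "S \<subseteq> T \<Longrightarrow> submod_span R M S \<subseteq> submod_span R M T"
  unfolding submod_span_def by blast

lemma submod_span_least: "S \<subseteq> H \<Longrightarrow> submodule H R M \<Longrightarrow> submod_span R M S \<subseteq> H"
  unfolding submod_span_def by blast

lemma submod_span_upper: "S \<subseteq> submod_span R M S"
  unfolding submod_span_def by blast

(* A context rather than the locale module: quot_module needs M of the record type module, not
   of an arbitrary module_scheme. *)
context
  fixes R :: "'r ring" and M :: "('r,'a) module"
  assumes M: "module R M"
begin

interpretation module R M by (rule M)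

lemma submodule_abelian_subgroup: "submodule N R M \<Longrightarrow> abelian_subgroup N M"
  by (intro abelian_subgroupI3 additive_subgroup.intro module.axioms(2)[OF module_axioms])
    (rule submodule.axioms(1))

lemma a_r_coset_eq_self_iff:
  assumes "submodule N R M" "a \<in> carrier M"
  shows "N +>\<^bsub>M\<^esub> a = N \<longleftrightarrow> a \<in> N"
proof -
  interpret N: abelian_subgroup N M by (rule submodule_abelian_subgroup) fact
  show ?thesis using N.a_rcos_self[OF assms(2)] N.a_rcos_const by auto
qed

lemma set_add_image_a_r_coset:
  assumes f: "f \<in> carrier M \<rightarrow> carrier M"
    and f_add: "\<And>x y. x \<in> carrier M \<Longrightarrow> y \<in> carrier M \<Longrightarrow> f (x \<oplus>\<^bsub>M\<^esub> y) = f x \<oplus>\<^bsub>M\<^esub> f y"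
    and N: "submodule N R M" and N': "submodule N' R M" and fN: "f ` N \<subseteq> N'"
    and a: "a \<in> carrier M"
  shows "N' <+>\<^bsub>M\<^esub> f ` (N +>\<^bsub>M\<^esub> a) = N' +>\<^bsub>M\<^esub> f a"
proof -
  interpret N: abelian_subgroup N M by (rule submodule_abelian_subgroup) fact
  interpret N': abelian_subgroup N' M by (rule submodule_abelian_subgroup) fact
  have a_mem: "a \<in> N +>\<^bsub>M\<^esub> a" by (rule N.a_rcos_self) fact
  show ?thesis
  proof (intro equalityI subsetI)
    fix x assume "x \<in> N' <+>\<^bsub>M\<^esub> f ` (N +>\<^bsub>M\<^esub> a)"
    then obtain n h where nh: "n \<in> N'" "h \<in> N" and x: "x = n \<oplus>\<^bsub>M\<^esub> f (h \<oplus>\<^bsub>M\<^esub> a)"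
      by (auto simp: mem_set_add mem_a_r_coset)
    have "x = (n \<oplus>\<^bsub>M\<^esub> f h) \<oplus>\<^bsub>M\<^esub> f a"
      using nh a by (simp add: x f_add a_assoc funcset_mem[OF f])
    moreover have "n \<oplus>\<^bsub>M\<^esub> f h \<in> N'" using nh fN by blast
    ultimately show "x \<in> N' +>\<^bsub>M\<^esub> f a" by (auto simp: mem_a_r_coset)
  next
    fix x assume "x \<in> N' +>\<^bsub>M\<^esub> f a"
    then show "x \<in> N' <+>\<^bsub>M\<^esub> f ` (N +>\<^bsub>M\<^esub> a)"
      unfolding mem_a_r_coset mem_set_add using a_mem by blast
  qed
qed

lemma set_add_smult_a_r_coset:
  assumes N: "submodule N R M" and r: "r \<in> carrier R" and a: "a \<in> carrier M"
  shows "N <+>\<^bsub>M\<^esub> (\<lambda>x. r \<odot>\<^bsub>M\<^esub> x) ` (N +>\<^bsub>M\<^esub> a) = N +>\<^bsub>M\<^esub> (r \<odot>\<^bsub>M\<^esub> a)"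
  by (rule set_add_image_a_r_coset[OF _ _ N N _ a])
    (use r submoduleE(4)[OF N] in \<open>auto simp: smult_r_distr\<close>)

lemma quot_module_is_module:
  assumes N: "submodule N R M"
  shows "module R (quot_module M N)" (is "module R ?Q")
proof -
  interpret N: abelian_subgroup N M by (rule submodule_abelian_subgroup) fact
  have carrier_Q: "carrier ?Q = (\<lambda>a. N +>\<^bsub>M\<^esub> a) ` carrier M"
    by (auto simp: quot_module_def A_RCOSETS_def')
  have zero_Q: "\<zero>\<^bsub>?Q\<^esub> = N +>\<^bsub>M\<^esub> \<zero>\<^bsub>M\<^esub>"
    by (simp add: quot_module_def N.a_subset)
  have add_Q: "(N +>\<^bsub>M\<^esub> a) \<oplus>\<^bsub>?Q\<^esub> (N +>\<^bsub>M\<^esub> b) = N +>\<^bsub>M\<^esub> (a \<oplus>\<^bsub>M\<^esub> b)"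
    if "a \<in> carrier M" "b \<in> carrier M" for a b
    using N.a_rcos_sum[OF that] by (simp add: quot_module_def)
  have smult_Q: "r \<odot>\<^bsub>?Q\<^esub> (N +>\<^bsub>M\<^esub> a) = N +>\<^bsub>M\<^esub> (r \<odot>\<^bsub>M\<^esub> a)"
    if "r \<in> carrier R" "a \<in> carrier M" for r a
    using set_add_smult_a_r_coset[OF N that] by (simp add: quot_module_def)
  show ?thesis
    by (intro moduleI abelian_groupI)
      (auto simp: carrier_Q zero_Q add_Q smult_Q a_ac smult_l_distr smult_r_distr smult_assoc1
        intro!: image_eqI is_cring, metis a_inv_closed r_neg)
qed

lemma zero_in_submodule: "submodule N R M \<Longrightarrow> \<zero>\<^bsub>M\<^esub> \<in> N"
  using subgroup.one_closed[OF submodule.axioms(1)] by fastforce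

lemma submoduleI_smult_closed:
  assumes "H \<subseteq> carrier M" "\<zero>\<^bsub>M\<^esub> \<in> H"
    and "\<And>a b. a \<in> H \<Longrightarrow> b \<in> H \<Longrightarrow> a \<oplus>\<^bsub>M\<^esub> b \<in> H"
    and smult: "\<And>r a. r \<in> carrier R \<Longrightarrow> a \<in> H \<Longrightarrow> r \<odot>\<^bsub>M\<^esub> a \<in> H"
  shows "submodule H R M"
proof (rule submoduleI)
  fix a assume "a \<in> H"
  moreover have "\<ominus>\<^bsub>M\<^esub> a = (\<ominus>\<^bsub>R\<^esub> \<one>\<^bsub>R\<^esub>) \<odot>\<^bsub>M\<^esub> a"
    using \<open>a \<in> H\<close> assms(1) smult_l_minus[of "\<one>\<^bsub>R\<^esub>" a] by auto
  ultimately show "\<ominus>\<^bsub>M\<^esub> a \<in> H" using smult by simp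
qed (use assms in auto)

lemma submod_span_submodule:
  assumes "S \<subseteq> carrier M"
  shows "submodule (submod_span R M S) R M"
proof (rule submoduleI_smult_closed)
  show "submod_span R M S \<subseteq> carrier M" by (rule submod_span_least[OF assms carrier_is_submodule])
  show "\<zero>\<^bsub>M\<^esub> \<in> submod_span R M S"
    unfolding submod_span_def using zero_in_submodule by blast
  show "a \<oplus>\<^bsub>M\<^esub> b \<in> submod_span R M S" if "a \<in> submod_span R M S" "b \<in> submod_span R M S" for a b
    using that submoduleE(5) unfolding submod_span_def by blast
  show "r \<odot>\<^bsub>M\<^esub> a \<in> submod_span R M S" if "r \<in> carrier R" "a \<in> submod_span R M S" for r a
    using that submoduleE(4) unfolding submod_span_def by blast
qed

lemma submodule_set_add:
  assumes H: "submodule H R M" and K: "submodule K R M"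
  shows "submodule (H <+>\<^bsub>M\<^esub> K) R M"
proof -
  note HK = submoduleE[OF H] submoduleE[OF K]
  show ?thesis
  proof (rule submoduleI_smult_closed)
    show "H <+>\<^bsub>M\<^esub> K \<subseteq> carrier M" using HK by (intro set_add_closed) auto
    show "\<zero>\<^bsub>M\<^esub> \<in> H <+>\<^bsub>M\<^esub> K"
      using zero_in_submodule[OF H] zero_in_submodule[OF K] by (force simp: mem_set_add)
  next
    fix a b assume "a \<in> H <+>\<^bsub>M\<^esub> K" "b \<in> H <+>\<^bsub>M\<^esub> K"
    then obtain h1 k1 h2 k2 where "h1 \<in> H" "k1 \<in> K" "h2 \<in> H" "k2 \<in> K"
      and "a = h1 \<oplus>\<^bsub>M\<^esub> k1" "b = h2 \<oplus>\<^bsub>M\<^esub> k2" by (auto simp: mem_set_add)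
    moreover from this have "a \<oplus>\<^bsub>M\<^esub> b = (h1 \<oplus>\<^bsub>M\<^esub> h2) \<oplus>\<^bsub>M\<^esub> (k1 \<oplus>\<^bsub>M\<^esub> k2)"
      using HK(1,7) by (simp add: a_ac subset_iff)
    ultimately show "a \<oplus>\<^bsub>M\<^esub> b \<in> H <+>\<^bsub>M\<^esub> K" unfolding mem_set_add using HK(5,11) by blast
  next
    fix r a assume r: "r \<in> carrier R" and "a \<in> H <+>\<^bsub>M\<^esub> K"
    then obtain h k where "h \<in> H" "k \<in> K" "a = h \<oplus>\<^bsub>M\<^esub> k" by (auto simp: mem_set_add)
    moreover from this have "r \<odot>\<^bsub>M\<^esub> a = r \<odot>\<^bsub>M\<^esub> h \<oplus>\<^bsub>M\<^esub> r \<odot>\<^bsub>M\<^esub> k"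
      using r HK(1,7) by (simp add: smult_r_distr subset_iff)
    ultimately show "r \<odot>\<^bsub>M\<^esub> a \<in> H <+>\<^bsub>M\<^esub> K" unfolding mem_set_add using r HK(4,10) by blast
  qed
qed

lemma set_add_subset_submodule:
  assumes "submodule H R M" "A \<subseteq> H" "B \<subseteq> H"
  shows "A <+>\<^bsub>M\<^esub> B \<subseteq> H"
  using submoduleE(5)[OF assms(1)] assms(2,3) by (force simp: set_add_def')

lemma mod_hom_zero:
  assumes "mod_hom R M M f"
  shows "f \<zero>\<^bsub>M\<^esub> = \<zero>\<^bsub>M\<^esub>"
proof -
  have "f \<zero>\<^bsub>M\<^esub> = f (\<zero>\<^bsub>R\<^esub> \<odot>\<^bsub>M\<^esub> \<zero>\<^bsub>M\<^esub>)" by simp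
  also have "\<dots> = \<zero>\<^bsub>R\<^esub> \<odot>\<^bsub>M\<^esub> f \<zero>\<^bsub>M\<^esub>"
    using assms R.zero_closed zero_closed unfolding mod_hom_def by blast
  also have "\<dots> = \<zero>\<^bsub>M\<^esub>" using assms by (intro smult_l_null) (auto simp: mod_hom_def)
  finally show ?thesis .
qed

lemma submodule_image:
  assumes f: "mod_hom R M M f" and P: "submodule P R M"
  shows "submodule (f ` P) R M"
proof (rule submoduleI_smult_closed)
  note Pc = submoduleE[OF P]
  show "f ` P \<subseteq> carrier M" using f Pc(1) by (auto simp: mod_hom_def)
  show "\<zero>\<^bsub>M\<^esub> \<in> f ` P"
    using mod_hom_zero[OF f] zero_in_submodule[OF P] by (metis imageI)
  show "a \<oplus>\<^bsub>M\<^esub> b \<in> f ` P" if "a \<in> f ` P" "b \<in> f ` P" for a b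
  proof -
    from that obtain p q where pq: "p \<in> P" "q \<in> P" "a = f p" "b = f q" by blast
    then have "a \<oplus>\<^bsub>M\<^esub> b = f (p \<oplus>\<^bsub>M\<^esub> q)" using f Pc(1) by (simp add: mod_hom_def subset_iff)
    then show ?thesis using pq Pc(5) by blast
  qed
  show "r \<odot>\<^bsub>M\<^esub> a \<in> f ` P" if "r \<in> carrier R" "a \<in> f ` P" for r a
  proof -
    from that obtain p where p: "p \<in> P" "a = f p" by blast
    then have "r \<odot>\<^bsub>M\<^esub> a = f (r \<odot>\<^bsub>M\<^esub> p)"
      using that(1) f Pc(1) by (simp add: mod_hom_def subset_iff)
    then show ?thesis using p that(1) Pc(4) by blast
  qed
qed

lemma submodule_preimage:
  assumes f: "mod_hom R M M f" and P: "submodule P R M" and N: "submodule N R M"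
  shows "submodule {p \<in> P. f p \<in> N} R M"
proof (rule submoduleI_smult_closed)
  note Pc = submoduleE[OF P] and Nc = submoduleE[OF N]
  show "{p \<in> P. f p \<in> N} \<subseteq> carrier M" using Pc(1) by auto
  show "\<zero>\<^bsub>M\<^esub> \<in> {p \<in> P. f p \<in> N}"
    using mod_hom_zero[OF f] zero_in_submodule[OF P] zero_in_submodule[OF N] by simp
  show "a \<oplus>\<^bsub>M\<^esub> b \<in> {p \<in> P. f p \<in> N}" if "a \<in> {p \<in> P. f p \<in> N}" "b \<in> {p \<in> P. f p \<in> N}" for a b
    using that f Pc(1,5) Nc(5) by (auto simp: mod_hom_def subset_iff)
  show "r \<odot>\<^bsub>M\<^esub> a \<in> {p \<in> P. f p \<in> N}" if "r \<in> carrier R" "a \<in> {p \<in> P. f p \<in> N}" for r a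
    using that f Pc(1,4) Nc(4) by (auto simp: mod_hom_def subset_iff)
qed

lemma subset_set_add_left: "\<zero>\<^bsub>M\<^esub> \<in> K \<Longrightarrow> H \<subseteq> carrier M \<Longrightarrow> H \<subseteq> H <+>\<^bsub>M\<^esub> K"
  by (force simp: mem_set_add)

lemma subset_set_add_right: "\<zero>\<^bsub>M\<^esub> \<in> H \<Longrightarrow> K \<subseteq> carrier M \<Longrightarrow> K \<subseteq> H <+>\<^bsub>M\<^esub> K"
  by (force simp: mem_set_add)

end

section \<open>Lengths of subquotients\<close>

lemma length_function_zero:
  "length_function R lam \<Longrightarrow> module R M \<Longrightarrow> carrier M = {\<zero>\<^bsub>M\<^esub>} \<Longrightarrow> lam M = 0"
  unfolding length_function_def by blast

lemma length_function_short_exact: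
  "length_function R lam \<Longrightarrow> module R L \<Longrightarrow> module R M \<Longrightarrow> module R N
    \<Longrightarrow> short_exact R L M N f g \<Longrightarrow> lam M = lam L + lam N"
  unfolding length_function_def by blast

(* A fresh context, so that quot_module_is_module applies to the module M\<lparr>carrier := P\<rparr>. *)
context
  fixes R :: "'r ring" and M :: "('r,'a) module"
  assumes M: "module R M"
begin

interpretation module R M by (rule M)

lemma subquotient_is_module:
  assumes P: "submodule P R M" and N: "submodule N R M" and NP: "N \<subseteq> P"
  shows "module R (subquotient M P N)"
proof -
  have MP: "module R (M\<lparr>carrier := P\<rparr>)" by (rule submodule.submodule_is_module[OF P M])
  have "submodule N R (M\<lparr>carrier := P\<rparr>)"
    by (rule module.module_incl_imp_submodule[OF MP])
      (use NP submodule.submodule_is_module[OF N M] in simp_all)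
  then show ?thesis unfolding subquotient_def by (rule quot_module_is_module[OF MP])
qed

lemma add_subquotient_coset:
  assumes "submodule N R M" "a \<in> carrier M" "b \<in> carrier M"
  shows "(N +>\<^bsub>M\<^esub> a) \<oplus>\<^bsub>subquotient M P N\<^esub> (N +>\<^bsub>M\<^esub> b) = N +>\<^bsub>M\<^esub> (a \<oplus>\<^bsub>M\<^esub> b)"
  using abelian_subgroup.a_rcos_sum[OF submodule_abelian_subgroup[OF M assms(1)] assms(2,3)]
  by (simp add: add_subquotient)

lemma smult_subquotient_coset:
  assumes "submodule N R M" "r \<in> carrier R" "a \<in> carrier M"
  shows "r \<odot>\<^bsub>subquotient M P N\<^esub> (N +>\<^bsub>M\<^esub> a) = N +>\<^bsub>M\<^esub> (r \<odot>\<^bsub>M\<^esub> a)"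
  using set_add_smult_a_r_coset[OF M assms] by (simp add: smult_subquotient)

lemma induced_map_coset:
  assumes f: "mod_hom R M M f" and N: "submodule N R M" and N': "submodule N' R M"
    and fN: "f ` N \<subseteq> N'" and a: "a \<in> carrier M"
  shows "N' <+>\<^bsub>M\<^esub> f ` (N +>\<^bsub>M\<^esub> a) = N' +>\<^bsub>M\<^esub> f a"
  using f by (intro set_add_image_a_r_coset[OF M _ _ N N' fN a]) (auto simp: mod_hom_def)

lemma induced_map_mod_hom:
  assumes f: "mod_hom R M M f" and P: "submodule P R M" and N: "submodule N R M"
    and N': "submodule N' R M" and fP: "f ` P \<subseteq> P'" and fN: "f ` N \<subseteq> N'"
  shows "mod_hom R (subquotient M P N) (subquotient M P' N') (\<lambda>C. N' <+>\<^bsub>M\<^esub> f ` C)"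
proof -
  note Pc = submoduleE[OF P]
  have fc: "f a \<in> carrier M" if "a \<in> P" for a
    using that f Pc(1) by (auto simp: mod_hom_def)
  have val: "N' <+>\<^bsub>M\<^esub> f ` (N +>\<^bsub>M\<^esub> a) = N' +>\<^bsub>M\<^esub> f a" if "a \<in> P" for a
    using induced_map_coset[OF f N N' fN] that Pc(1) by auto
  show ?thesis unfolding mod_hom_def
  proof (intro conjI ballI)
    show "(\<lambda>C. N' <+>\<^bsub>M\<^esub> f ` C) \<in> carrier (subquotient M P N) \<rightarrow> carrier (subquotient M P' N')"
      using val fP by (auto simp: carrier_subquotient)
  next
    fix x y assume "x \<in> carrier (subquotient M P N)" "y \<in> carrier (subquotient M P N)"
    then obtain a b where ab: "a \<in> P" "b \<in> P" and xy: "x = N +>\<^bsub>M\<^esub> a" "y = N +>\<^bsub>M\<^esub> b"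
      by (auto simp: carrier_subquotient)
    then show "N' <+>\<^bsub>M\<^esub> f ` (x \<oplus>\<^bsub>subquotient M P N\<^esub> y)
        = (N' <+>\<^bsub>M\<^esub> f ` x) \<oplus>\<^bsub>subquotient M P' N'\<^esub> (N' <+>\<^bsub>M\<^esub> f ` y)"
      using f Pc(1,5) fc val by (auto simp: add_subquotient_coset N N' mod_hom_def subset_iff)
  next
    fix r x assume r: "r \<in> carrier R" and "x \<in> carrier (subquotient M P N)"
    then obtain a where a: "a \<in> P" "x = N +>\<^bsub>M\<^esub> a" by (auto simp: carrier_subquotient)
    then show "N' <+>\<^bsub>M\<^esub> f ` (r \<odot>\<^bsub>subquotient M P N\<^esub> x)
        = r \<odot>\<^bsub>subquotient M P' N'\<^esub> (N' <+>\<^bsub>M\<^esub> f ` x)"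
      using r f Pc(1,4) fc val by (auto simp: smult_subquotient_coset N N' mod_hom_def subset_iff)
  qed
qed

lemma id_subquotient_mod_hom:
  assumes "K \<subseteq> P"
  shows "mod_hom R (subquotient M K N) (subquotient M P N) id"
  using assms by (auto simp: mod_hom_def carrier_subquotient add_subquotient smult_subquotient)

lemma short_exact_subquotient:
  assumes f: "mod_hom R M M f" and P: "submodule P R M" and N: "submodule N R M"
    and N': "submodule N' R M" and fN: "f ` N \<subseteq> N'"
  shows "short_exact R (subquotient M {p \<in> P. f p \<in> N'} N) (subquotient M P N)
           (subquotient M (N' <+>\<^bsub>M\<^esub> f ` P) N') id (\<lambda>C. N' <+>\<^bsub>M\<^esub> f ` C)"
proof -
  define K where "K = {p \<in> P. f p \<in> N'}"
  define I where "I = N' <+>\<^bsub>M\<^esub> f ` P"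
  note Pc = submoduleE[OF P]
  have fc: "f a \<in> carrier M" if "a \<in> P" for a
    using that f Pc(1) by (auto simp: mod_hom_def)
  have val: "N' <+>\<^bsub>M\<^esub> f ` (N +>\<^bsub>M\<^esub> a) = N' +>\<^bsub>M\<^esub> f a" if "a \<in> P" for a
    using induced_map_coset[OF f N N' fN] that Pc(1) by auto
  have fPI: "f ` P \<subseteq> I"
    unfolding I_def using zero_in_submodule[OF M N'] fc by (intro subset_set_add_right[OF M]) auto
  have surj: "(\<lambda>C. N' <+>\<^bsub>M\<^esub> f ` C) ` carrier (subquotient M P N) = carrier (subquotient M I N')"
  proof (intro equalityI subsetI)
    fix y assume "y \<in> carrier (subquotient M I N')"
    then obtain n p where np: "n \<in> N'" "p \<in> P" and y: "y = N' +>\<^bsub>M\<^esub> (n \<oplus>\<^bsub>M\<^esub> f p)"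
      by (auto simp: carrier_subquotient I_def mem_set_add)
    have "n \<oplus>\<^bsub>M\<^esub> f p \<in> N' +>\<^bsub>M\<^esub> f p" using np by (auto simp: mem_a_r_coset)
    then have "y = N' <+>\<^bsub>M\<^esub> f ` (N +>\<^bsub>M\<^esub> p)"
      using abelian_subgroup.a_repr_independence'[OF submodule_abelian_subgroup[OF M N']] fc np
      by (simp add: y val)
    then show "y \<in> (\<lambda>C. N' <+>\<^bsub>M\<^esub> f ` C) ` carrier (subquotient M P N)"
      using np(2) by (auto simp: carrier_subquotient)
  qed (use induced_map_mod_hom[OF f P N N' fPI fN] in \<open>auto simp: mod_hom_def\<close>)
  have ker: "carrier (subquotient M K N)
      = {x \<in> carrier (subquotient M P N). N' <+>\<^bsub>M\<^esub> f ` x = \<zero>\<^bsub>subquotient M I N'\<^esub>}"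
  proof -
    have "N' <+>\<^bsub>M\<^esub> f ` (N +>\<^bsub>M\<^esub> a) = N' \<longleftrightarrow> f a \<in> N'" if "a \<in> P" for a
      using a_r_coset_eq_self_iff[OF M N' fc[OF that]] val[OF that] by simp
    then show ?thesis by (auto simp: carrier_subquotient K_def)
  qed
  show ?thesis
    unfolding short_exact_def K_def[symmetric] I_def[symmetric]
    using id_subquotient_mod_hom induced_map_mod_hom[OF f P N N' fPI fN] surj ker
    by (auto simp: K_def)
qed

lemma length_subquotient_split:
  assumes lam: "length_function R lam"
    and f: "mod_hom R M M f" and P: "submodule P R M" and N: "submodule N R M"
    and N': "submodule N' R M" and NP: "N \<subseteq> P" and fN: "f ` N \<subseteq> N'"
  shows "lam (subquotient M P N)
    = lam (subquotient M {p \<in> P. f p \<in> N'} N) + lam (subquotient M (N' <+>\<^bsub>M\<^esub> f ` P) N')"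
proof -
  have I: "submodule (N' <+>\<^bsub>M\<^esub> f ` P) R M"
    by (intro submodule_set_add[OF M N'] submodule_image[OF M f P])
  have "N' \<subseteq> N' <+>\<^bsub>M\<^esub> f ` P"
    using zero_in_submodule[OF M submodule_image[OF M f P]] submoduleE(1)[OF N']
    by (rule subset_set_add_left[OF M])
  then have mI: "module R (subquotient M (N' <+>\<^bsub>M\<^esub> f ` P) N')"
    by (rule subquotient_is_module[OF I N'])
  have mK: "module R (subquotient M {p \<in> P. f p \<in> N'} N)"
    using NP fN by (intro subquotient_is_module submodule_preimage[OF M f P N'] N) auto
  have mP: "module R (subquotient M P N)" by (rule subquotient_is_module[OF P N NP])
  show ?thesis
    by (rule length_function_short_exact[OF lam mK mP mI short_exact_subquotient[OF f P N N' fN]])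
qed

lemma length_subquotient_tower:
  assumes lam: "length_function R lam"
    and P: "submodule P R M" and N: "submodule N R M" and I: "submodule I R M"
    and NI: "N \<subseteq> I" and IP: "I \<subseteq> P"
  shows "lam (subquotient M P N) = lam (subquotient M I N) + lam (subquotient M P I)"
proof -
  have id: "mod_hom R M M id" by (simp add: mod_hom_def)
  have "I <+>\<^bsub>M\<^esub> P = P"
  proof
    show "I <+>\<^bsub>M\<^esub> P \<subseteq> P" using IP by (intro set_add_subset_submodule[OF M P]) auto
    show "P \<subseteq> I <+>\<^bsub>M\<^esub> P"
      using zero_in_submodule[OF M I] submoduleE(1)[OF P] by (rule subset_set_add_right[OF M])
  qed
  moreover have "{p \<in> P. p \<in> I} = I" using IP by auto
  ultimately show ?thesis
    using length_subquotient_split[OF lam id P N I] NI IP by simp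
qed

lemma length_subquotient_self:
  assumes lam: "length_function R lam" and N: "submodule N R M"
  shows "lam (subquotient M N N) = 0"
proof -
  have "carrier (subquotient M N N) = {\<zero>\<^bsub>subquotient M N N\<^esub>}"
    using a_r_coset_eq_self_iff[OF M N] submoduleE(1)[OF N] zero_in_submodule[OF M N]
    by (auto simp: carrier_subquotient intro: rev_image_eqI)
  moreover have "module R (subquotient M N N)" by (rule subquotient_is_module[OF N N]) simp
  ultimately show ?thesis by (intro length_function_zero[OF lam])
qed

end

section \<open>Sequences that are eventually polynomial\<close>

lemma degree_power_difference:
  fixes d :: nat
  defines "E \<equiv> [:1, 1:] ^ Suc d - monom 1 (Suc d) :: 'a :: comm_ring_1 poly"
  shows "degree E \<le> d" and "coeff E d = of_nat (Suc d)"
    and "\<And>x. poly E x = (x + 1) ^ Suc d - x ^ Suc d"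
proof -
  have binomial: "coeff ([:1, 1:] ^ Suc d :: 'a poly) i = of_nat (Suc d choose i)" for i
    using coeff_linear_poly_power[of i "Suc d" "1::'a" 1]
    by (cases "i \<le> Suc d") (auto simp: binomial_eq_0 coeff_eq_0 degree_linear_power)
  show "degree E \<le> d"
    by (rule degree_le) (simp add: E_def binomial binomial_eq_0 del: power_Suc)
  show "coeff E d = of_nat (Suc d)" by (simp add: E_def binomial del: power_Suc)
  show "poly E x = (x + 1) ^ Suc d - x ^ Suc d" for x
    by (simp add: E_def poly_monom add.commute del: power_Suc)
qed

lemma polynomial_antidifference:
  fixes D :: "'a :: field_char_0 poly"
  shows "\<exists>Q. (\<forall>x. poly Q (x + 1) - poly Q x = poly D x) \<and> (D = 0 \<longrightarrow> Q = 0)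
           \<and> degree Q \<le> Suc (degree D)"
proof (induction "degree D" arbitrary: D rule: less_induct)
  case less
  show ?case
  proof (cases "D = 0")
    case True
    then show ?thesis by (intro exI[of _ 0]) simp
  next
    case False
    define d where "d = degree D"
    define E where "E = ([:1, 1:] ^ Suc d - monom 1 (Suc d) :: 'a poly)"
    define c where "c = lead_coeff D / of_nat (Suc d)"
    define D' where "D' = D - smult c E"
    \<comment> \<open>the difference of monom c (Suc d) is smult c E, which has the leading term of D\<close>
    have E: "degree E \<le> d" "coeff E d = of_nat (Suc d)" "\<And>x. poly E x = (x + 1) ^ Suc d - x ^ Suc d"
      unfolding E_def by (fact degree_power_difference)+
    have "coeff D' i = 0" if "i \<ge> d" for i
    proof (cases "i = d")
      case False
      with that have "i > d" by simp
      then show ?thesis using E(1) by (simp add: D'_def d_def coeff_eq_0 del: power_Suc)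
    qed (simp add: D'_def c_def E(2) del: of_nat_Suc flip: d_def)
    then have D'_small: "D' = 0 \<or> degree D' < d"
      by (metis leading_coeff_0_iff not_le)
    have "\<exists>Q'. (\<forall>x. poly Q' (x + 1) - poly Q' x = poly D' x) \<and> degree Q' \<le> d"
    proof (cases "D' = 0")
      case True
      then show ?thesis by (intro exI[of _ 0]) simp
    next
      case False
      with D'_small have "degree D' < degree D" by (simp add: d_def)
      with less(1)[of D'] D'_small False show ?thesis by fastforce
    qed
    then obtain Q' where Q': "\<forall>x. poly Q' (x + 1) - poly Q' x = poly D' x" "degree Q' \<le> d"
      by blast
    define Q where "Q = monom c (Suc d) + Q'"
    have "poly Q (x + 1) - poly Q x = poly D x" for x
    proof -
      have "poly Q (x + 1) - poly Q x = c * ((x + 1) ^ Suc d - x ^ Suc d) + poly D' x"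
        using Q'(1)[rule_format, of x] by (simp add: Q_def poly_monom algebra_simps)
      also have "\<dots> = poly D x" by (simp add: D'_def E(3))
      finally show ?thesis .
    qed
    moreover have "degree Q \<le> Suc (degree D)"
      unfolding Q_def d_def using Q'(2) d_def
      by (intro degree_add_le order.trans[OF degree_monom_le]) auto
    ultimately show ?thesis using False by blast
  qed
qed

lemma eventually_polynomial_of_difference:
  fixes a :: "nat \<Rightarrow> real"
  assumes diff: "\<forall>n\<ge>N. a (Suc n) - a n = poly D (real n)" and D: "D = 0 \<or> degree D < k"
  shows "\<exists>q. degree q \<le> k \<and> (\<forall>n\<ge>N. a n = poly q (real n))"
proof -
  obtain Q where Q: "\<forall>x. poly Q (x + 1) - poly Q x = poly D x" "D = 0 \<longrightarrow> Q = 0"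
    "degree Q \<le> Suc (degree D)"
    using polynomial_antidifference by blast
  define q where "q = Q + [:a N - poly Q (real N):]"
  have "a n = poly q (real n)" if "n \<ge> N" for n
    using that
  proof (induction n rule: dec_induct)
    case (step n)
    then show ?case using diff Q(1)[rule_format, of "real n"] by (simp add: q_def algebra_simps)
  qed (simp add: q_def)
  moreover have "degree Q \<le> k" using Q D by auto
  then have "degree q \<le> k" unfolding q_def by (intro degree_add_le) auto
  ultimately show ?thesis by blast
qed

(* ennreal sends negative reals to 0, so nonnegativity of the values of q is recorded explicitly. *)
definition eventually_poly :: "(nat \<Rightarrow> ennreal) \<Rightarrow> real poly \<Rightarrow> bool" where
  "eventually_poly a q \<longleftrightarrow>
     (\<forall>\<^sub>F n in sequentially. 0 \<le> poly q (real n) \<and> a n = ennreal (poly q (real n)))"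

lemma enn2real_add: "a < \<infinity> \<Longrightarrow> b < \<infinity> \<Longrightarrow> enn2real (a + b) = enn2real a + enn2real b"
  by (cases a; cases b) (simp_all flip: ennreal_plus)

lemma eventually_poly_of_splittings:
  fixes a b c d :: "nat \<Rightarrow> ennreal"
  assumes split: "\<forall>\<^sub>F n in sequentially. a n < \<infinity> \<and> a (Suc n) < \<infinity>
      \<and> a n = b n + c (Suc n) \<and> a (Suc n) = c (Suc n) + d (Suc n)"
    and b: "eventually_poly b qb" and d: "eventually_poly d qd"
    and deg: "qb = 0 \<or> degree qb < k" "qd = 0 \<or> degree qd < k"
  shows "\<exists>q. degree q \<le> k \<and> eventually_poly a q"
proof -
  obtain N where N: "\<And>n. n \<ge> N \<Longrightarrow> a n < \<infinity> \<and> a (Suc n) < \<infinity>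
      \<and> a n = b n + c (Suc n) \<and> a (Suc n) = c (Suc n) + d (Suc n)
      \<and> 0 \<le> poly qb (real n) \<and> b n = ennreal (poly qb (real n))
      \<and> 0 \<le> poly qd (real (Suc n)) \<and> d (Suc n) = ennreal (poly qd (real (Suc n)))"
    using eventually_conj[OF split eventually_conj[OF b[unfolded eventually_poly_def]
        d[unfolded eventually_poly_def, THEN eventually_sequentially_Suc[THEN iffD2]]]]
    unfolding eventually_sequentially by blast
  \<comment> \<open>the common term \<open>c (Suc n)\<close> cancels from the difference of consecutive values of \<open>a\<close>\<close>
  define D where "D = pcompose qd [:1, 1:] - qb"
  have diff: "\<forall>n\<ge>N. enn2real (a (Suc n)) - enn2real (a n) = poly D (real n)"
  proof (intro allI impI)
    fix n assume "n \<ge> N"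
    note N = N[OF this]
    then have "c (Suc n) < \<infinity>" by (auto simp: top_unique)
    then have "enn2real (a n) = poly qb (real n) + enn2real (c (Suc n))"
      "enn2real (a (Suc n)) = enn2real (c (Suc n)) + poly qd (real (Suc n))"
      using N by (simp_all add: enn2real_add)
    then show "enn2real (a (Suc n)) - enn2real (a n) = poly D (real n)"
      by (simp add: D_def poly_pcompose add.commute)
  qed
  have "D = 0 \<or> degree D < k"
  proof (cases "k = 0")
    case False
    then have "degree (pcompose qd [:1, 1:]) < k" "degree qb < k"
      using deg by (auto simp: degree_pcompose)
    moreover have "degree D \<le> max (degree (pcompose qd [:1, 1:])) (degree qb)"
      unfolding D_def by (rule degree_diff_le_max)
    ultimately show ?thesis by linarith
  qed (use deg in \<open>simp add: D_def\<close>)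
  then obtain q where q: "degree q \<le> k" "\<forall>n\<ge>N. enn2real (a n) = poly q (real n)"
    using eventually_polynomial_of_difference[OF diff] by blast
  have "0 \<le> poly q (real n) \<and> a n = ennreal (poly q (real n))" if "n \<ge> N" for n
  proof -
    have "a n < \<infinity>" using N[OF that] by blast
    then have "a n = ennreal (enn2real (a n))" by simp
    then show ?thesis using q(2) that by (metis enn2real_nonneg)
  qed
  then show ?thesis
    using q(1) unfolding eventually_poly_def eventually_sequentially by blast
qed

section \<open>Graded families of subquotients and their lengths\<close>

(* The subquotients P n / N n form a graded S-module, x_j acting in degree one; its graded
   S-submodules are given by the intermediate families H with N \<le> H \<le> P, and
   generated_in_bounded_degree is the graded form of its Noetherianity. *)
definition graded_family :: "'r ring \<Rightarrow> ('r,'a) module \<Rightarrow> nat \<Rightarrow> (nat \<Rightarrow> 'a \<Rightarrow> 'a)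
    \<Rightarrow> (nat \<Rightarrow> 'a set) \<Rightarrow> (nat \<Rightarrow> 'a set) \<Rightarrow> bool" where
  "graded_family R M k X P N \<longleftrightarrow> (\<forall>n. submodule (P n) R M \<and> submodule (N n) R M \<and> N n \<subseteq> P n
     \<and> (\<forall>j<k. X j ` P n \<subseteq> P (Suc n) \<and> X j ` N n \<subseteq> N (Suc n)))"

lemma graded_familyD:
  assumes "graded_family R M k X P N"
  shows "submodule (P n) R M" "submodule (N n) R M" "N n \<subseteq> P n"
    and "j < k \<Longrightarrow> X j ` P n \<subseteq> P (Suc n)" "j < k \<Longrightarrow> X j ` N n \<subseteq> N (Suc n)"
  using assms by (auto simp: graded_family_def)

definition graded_intermediate :: "'r ring \<Rightarrow> ('r,'a) module \<Rightarrow> nat \<Rightarrow> (nat \<Rightarrow> 'a \<Rightarrow> 'a)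
    \<Rightarrow> (nat \<Rightarrow> 'a set) \<Rightarrow> (nat \<Rightarrow> 'a set) \<Rightarrow> (nat \<Rightarrow> 'a set) \<Rightarrow> bool" where
  "graded_intermediate R M k X N P H \<longleftrightarrow> (\<forall>n. submodule (H n) R M \<and> N n \<subseteq> H n \<and> H n \<subseteq> P n
     \<and> (\<forall>j<k. X j ` H n \<subseteq> H (Suc n)))"

lemma graded_intermediateD:
  assumes "graded_intermediate R M k X N P H"
  shows "submodule (H n) R M" "N n \<subseteq> H n" "H n \<subseteq> P n" "j < k \<Longrightarrow> X j ` H n \<subseteq> H (Suc n)"
  using assms by (auto simp: graded_intermediate_def)

definition generated_in_bounded_degree :: "'r ring \<Rightarrow> ('r,'a) module \<Rightarrow> nat
    \<Rightarrow> (nat \<Rightarrow> 'a \<Rightarrow> 'a) \<Rightarrow> (nat \<Rightarrow> 'a set) \<Rightarrow> (nat \<Rightarrow> 'a set) \<Rightarrow> bool" where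
  "generated_in_bounded_degree R M k X P N \<longleftrightarrow> (\<forall>H. graded_intermediate R M k X N P H
     \<longrightarrow> (\<exists>n0. \<forall>n\<ge>n0. H (Suc n) \<subseteq> submod_span R M (N (Suc n) \<union> (\<Union>j<k. X j ` H n))))"

lemma generated_in_bounded_degree_drop_variable:
  assumes gen: "generated_in_bounded_degree R M (Suc k) X P N"
    and N': "\<And>n. N n \<subseteq> N' n" and P': "\<And>n. P' n \<subseteq> P n"
    and Xk: "\<And>n. X k ` P' n \<subseteq> N' (Suc n)"
  shows "generated_in_bounded_degree R M k X P' N'"
  unfolding generated_in_bounded_degree_def
proof (intro allI impI)
  \<comment> \<open>x_k acts as zero on P' / N', so an intermediate family for k variables is one for k + 1\<close>
  fix H assume H: "graded_intermediate R M k X N' P' H"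
  note H = graded_intermediateD[OF H]
  have XkH: "X k ` H n \<subseteq> N' (Suc n)" for n
    using H(3) Xk[of n] by blast
  have "graded_intermediate R M (Suc k) X N P H"
    unfolding graded_intermediate_def
  proof (intro allI conjI impI)
    fix n j
    show "submodule (H n) R M" by (rule H(1))
    show "N n \<subseteq> H n" using N' H(2) by (rule subset_trans)
    show "H n \<subseteq> P n" using H(3) P' by (rule subset_trans)
    assume "j < Suc k"
    then consider "j < k" | "j = k" by linarith
    then show "X j ` H n \<subseteq> H (Suc n)"
    proof cases
      case 2
      then show ?thesis using XkH H(2) by (metis subset_trans)
    qed (rule H(4))
  qed
  then obtain n0 where n0: "\<forall>n\<ge>n0. H (Suc n) \<subseteq> submod_span R M (N (Suc n) \<union> (\<Union>j<Suc k. X j ` H n))"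
    using gen by (auto simp: generated_in_bounded_degree_def)
  have "N (Suc n) \<union> (\<Union>j<Suc k. X j ` H n) \<subseteq> N' (Suc n) \<union> (\<Union>j<k. X j ` H n)" for n
    using N'[of "Suc n"] XkH[of n] unfolding lessThan_Suc by blast
  then have "H (Suc n) \<subseteq> submod_span R M (N' (Suc n) \<union> (\<Union>j<k. X j ` H n))" if "n \<ge> n0" for n
    using n0 that by (meson submod_span_mono subset_trans)
  then show "\<exists>n0. \<forall>n\<ge>n0. H (Suc n) \<subseteq> submod_span R M (N' (Suc n) \<union> (\<Union>j<k. X j ` H n))"
    by blast
qed

(* Kernel and image of multiplication by f on the graded module; the image is shifted up by one
   degree. *)
definition kernel_family :: "('a \<Rightarrow> 'a) \<Rightarrow> (nat \<Rightarrow> 'a set) \<Rightarrow> (nat \<Rightarrow> 'a set) \<Rightarrow> nat \<Rightarrow> 'a set" where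
  "kernel_family f P N n = {p \<in> P n. f p \<in> N (Suc n)}"

definition image_family :: "('r,'a) module \<Rightarrow> ('a \<Rightarrow> 'a) \<Rightarrow> (nat \<Rightarrow> 'a set) \<Rightarrow> (nat \<Rightarrow> 'a set)
    \<Rightarrow> nat \<Rightarrow> 'a set" where
  "image_family M f P N n = (case n of 0 \<Rightarrow> N 0 | Suc m \<Rightarrow> N (Suc m) <+>\<^bsub>M\<^esub> f ` P m)"

lemma smodule_less: "smodule R M (Suc k) X \<Longrightarrow> smodule R M k X"
  by (simp add: smodule_def)

lemma smoduleD:
  assumes "smodule R M k X"
  shows "j < k \<Longrightarrow> mod_hom R M M (X j)"
    and "i < k \<Longrightarrow> j < k \<Longrightarrow> x \<in> carrier M \<Longrightarrow> X i (X j x) = X j (X i x)"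
  using assms by (auto simp: smodule_def)

context
  fixes R :: "'r ring" and M :: "('r,'a) module"
  assumes M: "module R M"
begin

interpretation module R M by (rule M)

lemma graded_family_kernel:
  assumes X: "smodule R M (Suc k) X" and fam: "graded_family R M (Suc k) X P N"
  shows "graded_family R M k X (kernel_family (X k) P N) N"
  unfolding graded_family_def kernel_family_def
proof (intro allI conjI impI)
  fix n
  note fam = graded_familyD[OF fam]
  show "submodule {p \<in> P n. X k p \<in> N (Suc n)} R M"
    by (rule submodule_preimage[OF M smoduleD(1)[OF X lessI] fam(1,2)])
  show "submodule (N n) R M" by (rule fam(2))
  show "N n \<subseteq> {p \<in> P n. X k p \<in> N (Suc n)}" using fam(3) fam(5)[OF lessI] by blast
  fix j assume j: "j < k"
  then show "X j ` N n \<subseteq> N (Suc n)" using fam(5)[of j n] by simp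
  show "X j ` {p \<in> P n. X k p \<in> N (Suc n)} \<subseteq> {p \<in> P (Suc n). X k p \<in> N (Suc (Suc n))}"
  proof clarify
    fix p assume p: "p \<in> P n" "X k p \<in> N (Suc n)"
    have "j < Suc k" using j by simp
    moreover have "p \<in> carrier M" using p(1) submoduleE(1)[OF fam(1)] by blast
    ultimately have "X k (X j p) = X j (X k p)" by (rule smoduleD(2)[OF X lessI])
    moreover have "X j p \<in> P (Suc n)" using fam(4)[OF \<open>j < Suc k\<close>] p(1) by blast
    moreover have "X j (X k p) \<in> N (Suc (Suc n))" using fam(5)[OF \<open>j < Suc k\<close>] p(2) by blast
    ultimately show "X j p \<in> P (Suc n) \<and> X k (X j p) \<in> N (Suc (Suc n))" by simp
  qed
qed

lemma graded_family_image:
  assumes X: "smodule R M (Suc k) X" and fam: "graded_family R M (Suc k) X P N"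
  shows "graded_family R M k X P (image_family M (X k) P N)" (is "graded_family R M k X P ?C")
proof -
  note fam = graded_familyD[OF fam]
  have hom: "mod_hom R M M (X j)" if "j < Suc k" for j by (rule smoduleD(1)[OF X that])
  have XkP: "submodule (X k ` P m) R M" for m by (rule submodule_image[OF M hom[OF lessI] fam(1)])
  have Pc: "p \<in> carrier M" if "p \<in> P m" for p m using that submoduleE(1)[OF fam(1)] by blast
  have N_sub_C: "N (Suc m) \<subseteq> ?C (Suc m)" for m
    using subset_set_add_left[OF M zero_in_submodule[OF M XkP] submoduleE(1)[OF fam(2)]]
    by (simp add: image_family_def)
  show ?thesis
    unfolding graded_family_def
  proof (intro allI conjI impI)
    fix n
    show "submodule (P n) R M" by (rule fam(1))
    show "submodule (?C n) R M"
      by (cases n) (simp_all add: image_family_def fam(2) submodule_set_add[OF M fam(2) XkP])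
    show "?C n \<subseteq> P n"
    proof (cases n)
      case (Suc m)
      then show ?thesis
        using fam(3) fam(4)[OF lessI]
        by (simp add: image_family_def set_add_subset_submodule[OF M fam(1)])
    qed (simp add: image_family_def fam(3))
    fix j assume j: "j < k"
    then show "X j ` P n \<subseteq> P (Suc n)" using fam(4)[of j] by simp
    show "X j ` ?C n \<subseteq> ?C (Suc n)"
    proof (cases n)
      case 0
      then show ?thesis using j fam(5)[of j 0] N_sub_C[of 0] by (auto simp: image_family_def)
    next
      case (Suc m)
      show ?thesis
      proof
        fix y assume "y \<in> X j ` ?C n"
        then obtain a p where a: "a \<in> N (Suc m)" and p: "p \<in> P m"
          and y: "y = X j (a \<oplus>\<^bsub>M\<^esub> X k p)"
          by (auto simp: Suc image_family_def mem_set_add)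
        have "a \<in> carrier M" "X k p \<in> carrier M"
          using a p Pc fam(3) fam(4)[OF lessI] by blast+
        then have "y = X j a \<oplus>\<^bsub>M\<^esub> X j (X k p)"
          using hom[of j] j y unfolding mod_hom_def by simp
        also have "X j (X k p) = X k (X j p)"
          using smoduleD(2)[OF X, of j k p] j Pc[OF p] by simp
        finally have "y = X j a \<oplus>\<^bsub>M\<^esub> X k (X j p)" .
        moreover have "X j a \<in> N (Suc (Suc m))" using fam(5)[of j "Suc m"] j a by auto
        moreover have "X j p \<in> P (Suc m)" using fam(4)[of j m] j p by auto
        ultimately have "y \<in> N (Suc (Suc m)) <+>\<^bsub>M\<^esub> X k ` P (Suc m)"
          unfolding mem_set_add by blast
        then show "y \<in> ?C (Suc n)" by (simp add: Suc image_family_def)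
      qed
    qed
  qed
qed

lemma image_family_bounds:
  assumes X: "smodule R M (Suc k) X" and fam: "graded_family R M (Suc k) X P N"
  shows "N n \<subseteq> image_family M (X k) P N n" and "X k ` P n \<subseteq> image_family M (X k) P N (Suc n)"
proof -
  note fam = graded_familyD[OF fam]
  have XkP: "submodule (X k ` P m) R M" for m
    by (rule submodule_image[OF M smoduleD(1)[OF X lessI] fam(1)])
  show "N n \<subseteq> image_family M (X k) P N n"
    using subset_set_add_left[OF M zero_in_submodule[OF M XkP] submoduleE(1)[OF fam(2)]]
    by (cases n) (simp_all add: image_family_def)
  show "X k ` P n \<subseteq> image_family M (X k) P N (Suc n)"
    using subset_set_add_right[OF M zero_in_submodule[OF M fam(2)] submoduleE(1)[OF XkP]]
    by (simp add: image_family_def)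
qed

lemma generated_in_bounded_degree_kernel:
  assumes "generated_in_bounded_degree R M (Suc k) X P N"
  shows "generated_in_bounded_degree R M k X (kernel_family (X k) P N) N"
  by (rule generated_in_bounded_degree_drop_variable[OF assms]) (auto simp: kernel_family_def)

lemma generated_in_bounded_degree_image:
  assumes "smodule R M (Suc k) X" "graded_family R M (Suc k) X P N"
    and "generated_in_bounded_degree R M (Suc k) X P N"
  shows "generated_in_bounded_degree R M k X P (image_family M (X k) P N)"
  using image_family_bounds[OF assms(1,2)]
  by (intro generated_in_bounded_degree_drop_variable[OF assms(3)]) auto

lemma length_split_kernel:
  assumes lam: "length_function R lam"
    and X: "smodule R M (Suc k) X" and fam: "graded_family R M (Suc k) X P N"
  shows "lam (subquotient M (P n) (N n)) = lam (subquotient M (kernel_family (X k) P N n) (N n))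
           + lam (subquotient M (image_family M (X k) P N (Suc n)) (N (Suc n)))"
  using length_subquotient_split[OF M lam smoduleD(1)[OF X lessI]] graded_familyD[OF fam]
  by (simp add: kernel_family_def image_family_def)

lemma length_split_image:
  assumes lam: "length_function R lam"
    and X: "smodule R M (Suc k) X" and fam: "graded_family R M (Suc k) X P N"
  shows "lam (subquotient M (P (Suc n)) (N (Suc n)))
    = lam (subquotient M (image_family M (X k) P N (Suc n)) (N (Suc n)))
      + lam (subquotient M (P (Suc n)) (image_family M (X k) P N (Suc n)))"
  using graded_familyD[OF fam] graded_familyD[OF graded_family_image[OF X fam]]
    image_family_bounds(1)[OF X fam]
  by (intro length_subquotient_tower[OF M lam]) auto

lemma length_eventually_zero:
  assumes lam: "length_function R lam" and fam: "graded_family R M 0 X P N"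
    and gen: "generated_in_bounded_degree R M 0 X P N"
  shows "\<forall>\<^sub>F n in sequentially. lam (subquotient M (P n) (N n)) = 0"
proof -
  note fam = graded_familyD[OF fam]
  have "graded_intermediate R M 0 X N P P"
    using fam by (simp add: graded_intermediate_def)
  then obtain n0 where "\<forall>n\<ge>n0. P (Suc n) \<subseteq> submod_span R M (N (Suc n))"
    using gen by (auto simp: generated_in_bounded_degree_def)
  then have "P (Suc n) = N (Suc n)" if "n \<ge> n0" for n
    using that fam(2,3) submod_span_least[of "N (Suc n)" "N (Suc n)" R M] by blast
  then have "\<forall>\<^sub>F n in sequentially. lam (subquotient M (P (Suc n)) (N (Suc n))) = 0"
    unfolding eventually_sequentially using length_subquotient_self[OF M lam fam(2)] by metis
  then show ?thesis by (rule eventually_sequentially_Suc[THEN iffD1])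
qed

theorem length_graded_family_eventually_poly:
  assumes lam: "length_function R lam"
    and "smodule R M k X" "graded_family R M k X P N" "generated_in_bounded_degree R M k X P N"
    and "\<forall>\<^sub>F n in sequentially. lam (subquotient M (P n) (N n)) < \<infinity>"
  shows "\<exists>q. (q = 0 \<or> degree q < k) \<and> eventually_poly (\<lambda>n. lam (subquotient M (P n) (N n))) q"
  using assms(2-)
proof (induction k arbitrary: P N)
  case 0
  then show ?case
    using length_eventually_zero[OF lam]
    by (intro exI[of _ 0]) (auto simp: eventually_poly_def elim!: eventually_mono)
next
  case (Suc k)
  note X = Suc.prems(1) and fam = Suc.prems(2) and gen = Suc.prems(3) and fin = Suc.prems(4)
  let ?K = "kernel_family (X k) P N" and ?C = "image_family M (X k) P N"
  note split_K = length_split_kernel[OF lam X fam] and split_C = length_split_image[OF lam X fam]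
  have "\<forall>\<^sub>F n in sequentially. lam (subquotient M (?K n) (N n)) < \<infinity>"
    using fin by eventually_elim (simp add: split_K)
  then obtain qK where qK: "qK = 0 \<or> degree qK < k"
    and K: "eventually_poly (\<lambda>n. lam (subquotient M (?K n) (N n))) qK"
    using Suc.IH[OF smodule_less[OF X] graded_family_kernel[OF X fam]
        generated_in_bounded_degree_kernel[OF gen]] by blast
  have "\<forall>\<^sub>F n in sequentially. lam (subquotient M (P (Suc n)) (?C (Suc n))) < \<infinity>"
    using eventually_sequentially_Suc[THEN iffD2, OF fin] by eventually_elim (simp add: split_C)
  then have "\<forall>\<^sub>F n in sequentially. lam (subquotient M (P n) (?C n)) < \<infinity>"
    by (rule eventually_sequentially_Suc[THEN iffD1])
  then obtain qC where qC: "qC = 0 \<or> degree qC < k"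
    and C: "eventually_poly (\<lambda>n. lam (subquotient M (P n) (?C n))) qC"
    using Suc.IH[OF smodule_less[OF X] graded_family_image[OF X fam]
        generated_in_bounded_degree_image[OF X fam gen]] by blast
  from fin eventually_sequentially_Suc[THEN iffD2, OF fin]
  have "\<forall>\<^sub>F n in sequentially. lam (subquotient M (P n) (N n)) < \<infinity>
      \<and> lam (subquotient M (P (Suc n)) (N (Suc n))) < \<infinity>
      \<and> lam (subquotient M (P n) (N n))
        = lam (subquotient M (?K n) (N n)) + lam (subquotient M (?C (Suc n)) (N (Suc n)))
      \<and> lam (subquotient M (P (Suc n)) (N (Suc n)))
        = lam (subquotient M (?C (Suc n)) (N (Suc n)))
          + lam (subquotient M (P (Suc n)) (?C (Suc n)))"
  proof eventually_elim
    case (elim n)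
    then show ?case using split_K[of n] split_C[of n] by blast
  qed
  then have "\<exists>q. degree q \<le> k \<and> eventually_poly (\<lambda>n. lam (subquotient M (P n) (N n))) q"
    by (rule eventually_poly_of_splittings[OF _ K C qK qC])
  then show ?case using less_Suc_eq_le by blast
qed

end

section \<open>The associated graded module of a filtration\<close>

lemma gr_piece_eq_subquotient: "gr_piece A Af i = subquotient A (Af (Suc i)) (Af i)"
  by (simp add: gr_piece_def subquotient_def)

lemma carrier_assoc_graded:
  "b \<in> carrier (assoc_graded A Af)
     \<longleftrightarrow> (\<forall>i. b i \<in> (\<lambda>a. Af i +>\<^bsub>A\<^esub> a) ` Af (Suc i)) \<and> finite {i. b i \<noteq> Af i}"
  by (simp add: assoc_graded_def gr_piece_eq_subquotient carrier_subquotient)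

lemma zero_assoc_graded [simp]: "\<zero>\<^bsub>assoc_graded A Af\<^esub> = Af"
  by (simp add: assoc_graded_def)

lemma add_assoc_graded: "(b \<oplus>\<^bsub>assoc_graded A Af\<^esub> c) i = b i <+>\<^bsub>A\<^esub> c i"
  by (simp add: assoc_graded_def)

lemma smult_assoc_graded: "(r \<odot>\<^bsub>assoc_graded A Af\<^esub> b) i = Af i <+>\<^bsub>A\<^esub> (\<lambda>x. r \<odot>\<^bsub>A\<^esub> x) ` b i"
  by (simp add: assoc_graded_def gr_piece_eq_subquotient smult_subquotient)

definition graded_sub :: "('r,'a) module \<Rightarrow> (nat \<Rightarrow> 'a set) \<Rightarrow> (nat \<Rightarrow> 'a set)
    \<Rightarrow> (nat \<Rightarrow> 'a set) set" where
  "graded_sub A Af W = {b \<in> carrier (assoc_graded A Af). \<forall>i. b i \<subseteq> W i}"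

lemma assoc_graded_finite_support:
  assumes "finite F" "F \<subseteq> carrier (assoc_graded A Af)"
  shows "\<exists>n0. \<forall>f\<in>F. \<forall>i\<ge>n0. f i = Af i"
proof -
  have "finite (\<Union>f\<in>F. {i. f i \<noteq> Af i})"
    using assms by (auto simp: carrier_assoc_graded)
  then obtain n0 where n0: "(\<Union>f\<in>F. {i. f i \<noteq> Af i}) \<subseteq> {..<n0}"
    using finite_nat_bounded by blast
  have "f i = Af i" if "f \<in> F" "n0 \<le> i" for f i
  proof (rule ccontr)
    assume "f i \<noteq> Af i"
    then have "i \<in> {..<n0}" using n0 that(1) by blast
    with that(2) show False by simp
  qed
  then show ?thesis by blast
qed

context
  fixes R :: "'r ring" and A :: "('r,'a) module"
  assumes A: "module R A"
begin

interpretation module R A by (rule A)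

lemma assoc_graded_single:
  assumes Af: "\<And>i. submodule (Af i) R A" and h: "h \<in> Af (Suc i)"
  shows "Af(i := Af i +>\<^bsub>A\<^esub> h) \<in> carrier (assoc_graded A Af)"
  unfolding carrier_assoc_graded
proof (intro conjI allI)
  fix l
  have "Af l = Af l +>\<^bsub>A\<^esub> \<zero>\<^bsub>A\<^esub>" using submoduleE(1)[OF Af] by simp
  then show "(Af(i := Af i +>\<^bsub>A\<^esub> h)) l \<in> (\<lambda>a. Af l +>\<^bsub>A\<^esub> a) ` Af (Suc l)"
    using h zero_in_submodule[OF A Af] by auto
  have "{l. (Af(i := Af i +>\<^bsub>A\<^esub> h)) l \<noteq> Af l} \<subseteq> {i}" by auto
  then show "finite {l. (Af(i := Af i +>\<^bsub>A\<^esub> h)) l \<noteq> Af l}" by (rule finite_subset) simp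
qed

lemma s_submodule_graded_sub:
  assumes G: "smodule R (assoc_graded A Af) k (assoc_graded_X A Af X)"
    and Af: "\<And>i. submodule (Af i) R A"
    and W: "\<And>i. submodule (W i) R A" "\<And>i. Af i \<subseteq> W i"
    and XW: "\<And>i j. j < k \<Longrightarrow> X j ` W i \<subseteq> W (Suc i)"
  shows "s_submodule R (assoc_graded A Af) k (assoc_graded_X A Af X) (graded_sub A Af W)"
proof -
  have mG: "module R (assoc_graded A Af)" using G by (simp add: smodule_def)
  interpret G: module R "assoc_graded A Af" by (rule mG)
  have sub: "submodule (graded_sub A Af W) R (assoc_graded A Af)"
  proof (rule submoduleI_smult_closed[OF mG])
    show "graded_sub A Af W \<subseteq> carrier (assoc_graded A Af)" by (auto simp: graded_sub_def)
    show "\<zero>\<^bsub>assoc_graded A Af\<^esub> \<in> graded_sub A Af W"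
      using W(2) G.zero_closed by (simp add: graded_sub_def)
  next
    fix b c assume b: "b \<in> graded_sub A Af W" and c: "c \<in> graded_sub A Af W"
    have "b i <+>\<^bsub>A\<^esub> c i \<subseteq> W i" for i
      using b c by (intro set_add_subset_submodule[OF A W(1)]) (auto simp: graded_sub_def)
    moreover have "b \<oplus>\<^bsub>assoc_graded A Af\<^esub> c \<in> carrier (assoc_graded A Af)"
      using b c by (intro G.a_closed) (auto simp: graded_sub_def)
    ultimately show "b \<oplus>\<^bsub>assoc_graded A Af\<^esub> c \<in> graded_sub A Af W"
      by (simp add: graded_sub_def add_assoc_graded)
  next
    fix r b assume r: "r \<in> carrier R" and b: "b \<in> graded_sub A Af W"
    have "(\<lambda>x. r \<odot>\<^bsub>A\<^esub> x) ` b i \<subseteq> W i" for i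
      using b r submoduleE(4)[OF W(1)] unfolding graded_sub_def by blast
    then have "Af i <+>\<^bsub>A\<^esub> (\<lambda>x. r \<odot>\<^bsub>A\<^esub> x) ` b i \<subseteq> W i" for i
      using W(2) by (intro set_add_subset_submodule[OF A W(1)])
    moreover have "r \<odot>\<^bsub>assoc_graded A Af\<^esub> b \<in> carrier (assoc_graded A Af)"
      using r b by (intro G.smult_closed) (auto simp: graded_sub_def)
    ultimately show "r \<odot>\<^bsub>assoc_graded A Af\<^esub> b \<in> graded_sub A Af W"
      by (simp add: graded_sub_def smult_assoc_graded)
  qed
  have "assoc_graded_X A Af X j b \<in> graded_sub A Af W"
    if j: "j < k" and b: "b \<in> graded_sub A Af W" for j b
  proof -
    have "assoc_graded_X A Af X j b \<in> carrier (assoc_graded A Af)"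
      using smoduleD(1)[OF G j] b by (auto simp: mod_hom_def graded_sub_def)
    moreover have "assoc_graded_X A Af X j b i \<subseteq> W i" for i
    proof (cases i)
      case (Suc l)
      have "X j ` b l \<subseteq> W i" using b XW[OF j, of l] Suc by (auto simp: graded_sub_def)
      then show ?thesis
        using Suc W(2) by (simp add: assoc_graded_X_def set_add_subset_submodule[OF A W(1)])
    qed (simp add: assoc_graded_X_def W(2))
    ultimately show ?thesis by (simp add: graded_sub_def)
  qed
  then show ?thesis using sub by (auto simp: s_submodule_def)
qed

lemma noetherian_generated_in_bounded_degree:
  assumes filt: "filtration R A k X Af"
    and noeth: "noetherian_smodule R (assoc_graded A Af) k (assoc_graded_X A Af X)"
  shows "generated_in_bounded_degree R A k X (\<lambda>n. Af (Suc n)) Af"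
  unfolding generated_in_bounded_degree_def
proof (intro allI impI)
  fix H assume "graded_intermediate R A k X Af (\<lambda>n. Af (Suc n)) H"
  note H = graded_intermediateD[OF this]
  have Af: "submodule (Af i) R A" for i using filt by (simp add: filtration_def)
  have G: "smodule R (assoc_graded A Af) k (assoc_graded_X A Af X)"
    using noeth by (simp add: noetherian_smodule_def)
  obtain F where F: "finite F" "F \<subseteq> graded_sub A Af H"
    and span_F: "graded_sub A Af H = s_span R (assoc_graded A Af) k (assoc_graded_X A Af X) F"
    using noeth s_submodule_graded_sub[OF G Af H(1,2,4)] unfolding noetherian_smodule_def by blast
  have "F \<subseteq> carrier (assoc_graded A Af)" using F(2) by (auto simp: graded_sub_def)
  then obtain n0 where n0: "\<forall>f\<in>F. \<forall>i\<ge>n0. f i = Af i"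
    using assoc_graded_finite_support[OF F(1)] by blast
  \<comment> \<open>W agrees with H up to degree n0 and is generated from the previous degree above it; as the
    generators F of graded_sub A Af H vanish above n0, graded_sub A Af H lies in graded_sub A Af W\<close>
  define W where "W i = (if n0 < i then submod_span R A (Af i \<union> (\<Union>j<k. X j ` H (i - 1))) else H i)"
    for i
  have span_Suc: "W (Suc i) = submod_span R A (Af (Suc i) \<union> (\<Union>j<k. X j ` H i))" if "n0 \<le> i" for i
    using that by (simp add: W_def)
  have H_carrier: "H i \<subseteq> carrier A" for i using submoduleE(1)[OF H(1)] .
  have W_sub_H: "W i \<subseteq> H i" for i
  proof (cases i)
    case (Suc l)
    have "Af (Suc l) \<union> (\<Union>j<k. X j ` H l) \<subseteq> H (Suc l)" using H(2,4) by blast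
    then show ?thesis using Suc by (simp add: W_def submod_span_least[OF _ H(1)])
  qed (simp add: W_def)
  have W: "submodule (W i) R A" "Af i \<subseteq> W i" for i
  proof -
    have "X j ` H l \<subseteq> carrier A" if "j < k" for j l using H(4)[OF that] H_carrier by blast
    then have "Af i \<union> (\<Union>j<k. X j ` H (i - 1)) \<subseteq> carrier A"
      using submoduleE(1)[OF Af] by blast
    then show "submodule (W i) R A"
      using H(1) submod_span_submodule[OF A] by (simp add: W_def)
    show "Af i \<subseteq> W i"
      using H(2) submod_span_upper[of "Af i \<union> (\<Union>j<k. X j ` H (i - 1))" R A] by (auto simp: W_def)
  qed
  have XW: "X j ` W i \<subseteq> W (Suc i)" if j: "j < k" for i j
  proof (cases "n0 \<le> i")
    case True
    have "X j ` W i \<subseteq> Af (Suc i) \<union> (\<Union>j<k. X j ` H i)" using W_sub_H j by blast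
    then show ?thesis unfolding span_Suc[OF True] by (rule subset_trans[OF _ submod_span_upper])
  next
    case False
    then show ?thesis using W_sub_H H(4)[OF j, of i] by (simp add: W_def)
  qed
  have "F \<subseteq> graded_sub A Af W"
  proof
    fix f assume f: "f \<in> F"
    have "f i \<subseteq> W i" for i
    proof (cases "n0 < i")
      case True
      then have "f i = Af i" using n0 f by simp
      then show ?thesis using W(2) by simp
    next
      case False
      then show ?thesis using f F(2) by (auto simp: W_def graded_sub_def)
    qed
    then show "f \<in> graded_sub A Af W" using f F(2) by (auto simp: graded_sub_def)
  qed
  then have sub_W: "graded_sub A Af H \<subseteq> graded_sub A Af W"
    unfolding span_F s_span_def using s_submodule_graded_sub[OF G Af W XW]
    by (intro Inter_lower) simp
  have "H (Suc n) \<subseteq> W (Suc n)" if "n0 \<le> n" for n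
  proof
    fix h assume h: "h \<in> H (Suc n)"
    define e where "e = Af(Suc n := Af (Suc n) +>\<^bsub>A\<^esub> h)"
    have "e \<in> carrier (assoc_graded A Af)"
      unfolding e_def using h H(3) by (intro assoc_graded_single[OF Af]) auto
    moreover have "e i \<subseteq> H i" for i
    proof (cases "i = Suc n")
      case True
      have "Af (Suc n) +>\<^bsub>A\<^esub> h \<subseteq> H (Suc n)"
        using h H(2) submoduleE(5)[OF H(1)] unfolding a_r_coset_def' by blast
      then show ?thesis using True by (simp add: e_def)
    qed (simp add: e_def H(2))
    ultimately have "e \<in> graded_sub A Af H" by (simp add: graded_sub_def)
    then have "e \<in> graded_sub A Af W" using sub_W by blast
    then have "e (Suc n) \<subseteq> W (Suc n)" by (simp add: graded_sub_def)
    then have "Af (Suc n) +>\<^bsub>A\<^esub> h \<subseteq> W (Suc n)" by (simp add: e_def)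
    moreover have "h \<in> Af (Suc n) +>\<^bsub>A\<^esub> h"
      by (rule abelian_subgroup.a_rcos_self[OF submodule_abelian_subgroup[OF A Af]])
        (use h H_carrier in blast)
    ultimately show "h \<in> W (Suc n)" by blast
  qed
  then have "\<forall>n\<ge>n0. H (Suc n) \<subseteq> submod_span R A (Af (Suc n) \<union> (\<Union>j<k. X j ` H n))"
    using span_Suc by simp
  then show "\<exists>n0. \<forall>n\<ge>n0. H (Suc n) \<subseteq> submod_span R A (Af (Suc n) \<union> (\<Union>j<k. X j ` H n))"
    by blast
qed

end

lemma filtration_graded_family:
  "filtration R A k X Af \<Longrightarrow> graded_family R A k X (\<lambda>n. Af (Suc n)) Af"
  by (simp add: filtration_def graded_family_def)

theorem proposition11p2:
  fixes R :: "'r ring" and A :: "('r,'c) module" and k :: nat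
    and X :: "nat \<Rightarrow> 'c \<Rightarrow> 'c" and Af :: "nat \<Rightarrow> 'c set"
    and lam :: "('r, 'c set) module \<Rightarrow> ennreal"
  assumes "cring R" and "noetherian_ring R"
    and "length_function R lam"
    and "smodule R A k X"
    and "lambda_inert R lam A k X Af"
  shows "\<exists>q :: real poly. (q = 0 \<or> degree q < k) \<and>
           (\<exists>N. \<forall>n\<ge>N. poly q (real n) \<ge> 0 \<and> lam (gr_piece A Af n) = ennreal (poly q (real n)))"
proof -
  have A: "module R A" using assms(4) by (simp add: smodule_def)
  have filt: "filtration R A k X Af"
    and noeth: "noetherian_smodule R (assoc_graded A Af) k (assoc_graded_X A Af X)"
    and fin: "\<forall>\<^sub>F n in sequentially. lam (gr_piece A Af n) < \<infinity>"
    using assms(5) by (simp_all add: lambda_inert_def eventually_sequentially)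
  have "\<exists>q. (q = 0 \<or> degree q < k) \<and> eventually_poly (\<lambda>n. lam (gr_piece A Af n)) q"
    using length_graded_family_eventually_poly[OF A assms(3,4) filtration_graded_family[OF filt]
        noetherian_generated_in_bounded_degree[OF A filt noeth]] fin
    by (simp add: gr_piece_eq_subquotient)
  then show ?thesis by (simp add: eventually_poly_def eventually_sequentially)
qed

end
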